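(* Let $n\geq 0$ and $0\leq l,m\leq n$ be integers. Then, as an identity of rational functions in $q$ and $z$, \[ \sum_{\substack{k=0\\ k\neq m}}^{n}{n\brack k}\frac{(q/z;q)_k (zq^{-l};q)_{n-k}}{1-q^{k-m}} z^k =(-1)^m q^{\binom{m+1}{2}}{n\brack m}(zq^{-l};q)_l(zq^{-m};q)_{n-l}\left(\sum_{k=0}^{n-l-1}\frac{zq^{k-m}}{1-zq^{k-m}} - \sum_{\substack{k=0\\ k\neq m}}^{n}\frac{q^{k-m}}{1-q^{k-m}} \right). \]
   Context: For $N\geq 0$, $(x;q)_N=(1-x)(1-xq)\cdots(1-xq^{N-1})$ (with $(x;q)_0=1$). The $q$-binomial coefficient is ${n\brack k}=\frac{(q;q)_n}{(q;q)_k(q;q)_{n-k}}$ for $0\leq k\leq n$ and $0$ otherwise. *)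

theory Defs
  imports Complex_Main
begin

definition qpoch :: "complex \<Rightarrow> complex \<Rightarrow> nat \<Rightarrow> complex" where
  "qpoch x q N = (\<Prod>i<N. 1 - x * q ^ i)"

definition qbinom :: "complex \<Rightarrow> nat \<Rightarrow> nat \<Rightarrow> complex" where
  "qbinom q n k = (if k \<le> n then qpoch q q n / (qpoch q q k * qpoch q q (n - k)) else 0)"

end

theory Submission
  imports Defs "HOL-Computational_Algebra.Polynomial"
begin

(* Let a_k = [n,k] (q/z;q)_k (zq^-l;q)_(n-k) z^k. The polynomial P(t) = sum_k a_k prod_(j<>k) (1 - q^j t)
   has degree at most n and agrees with (q;q)_n (zq^-l;q)_l prod_(i<n-l) (1 - z q^i t) at the n+1
   distinct points t = q^-k, so the two are equal. Now compare t P'(t) at t = q^-m, the root of the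
   m-th linear factor. The product form gives -P(q^-m) times the first sum on the right. In the
   Lagrange form only a_m times the derivative of prod_(j<>m) and, for k <> m, the derivative of the
   m-th factor survive, giving -prod_(j<>m) (1 - q^(j-m)) times (LHS + a_m times the second sum).
   Since P(q^-m) = a_m prod_(j<>m) (1 - q^(j-m)), the identity follows, with a_m rewritten as the
   stated prefactor. *)

lemma pderiv_sum: "pderiv (sum f A) = (\<Sum>x\<in>A. pderiv (f x))"
  using higher_pderiv_sum[of 1 f A] by simp

lemma degree_prod_linear_le:
  "degree (\<Prod>j\<in>S. [:1, - c j:] :: 'a::comm_ring_1 poly) \<le> card S"
proof (cases "finite S")
  case True
  have "degree (\<Prod>j\<in>S. [:1, - c j:] :: 'a poly) \<le> (\<Sum>j\<in>S. degree [:1, - c j:])"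
    using degree_prod_sum_le[OF True, of "\<lambda>j. [:1, - c j:]"] by (simp add: comp_def)
  also have "\<dots> \<le> (\<Sum>j\<in>S. 1)"
    by (intro sum_mono) (simp add: degree_pCons_eq_if)
  finally show ?thesis by simp
qed simp

lemma poly_pderiv_prod_linear:
  fixes c :: "'b \<Rightarrow> 'a::field"
  assumes "finite S" and "\<And>i. i \<in> S \<Longrightarrow> c i * x \<noteq> 1"
  shows "x * poly (pderiv (\<Prod>i\<in>S. [:1, - c i:])) x
       = - (\<Prod>i\<in>S. 1 - c i * x) * (\<Sum>i\<in>S. c i * x / (1 - c i * x))"
proof -
  have "x * poly (pderiv (\<Prod>i\<in>S. [:1, - c i:])) x = (\<Sum>i\<in>S. - (\<Prod>j\<in>S - {i}. 1 - c j * x) * (c i * x))"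
    by (simp add: pderiv_prod pderiv_pCons poly_sum poly_prod sum_distrib_left mult_ac)
  also have "\<dots> = (\<Sum>i\<in>S. - (\<Prod>j\<in>S. 1 - c j * x) * (c i * x / (1 - c i * x)))"
  proof (intro sum.cong refl)
    fix i assume "i \<in> S"
    then have remove: "(\<Prod>j\<in>S. 1 - c j * x) = (1 - c i * x) * (\<Prod>j\<in>S - {i}. 1 - c j * x)"
      by (rule prod.remove[OF assms(1)])
    show "- (\<Prod>j\<in>S - {i}. 1 - c j * x) * (c i * x)
        = - (\<Prod>j\<in>S. 1 - c j * x) * (c i * x / (1 - c i * x))"
      unfolding remove using assms(2)[OF \<open>i \<in> S\<close>] by simp
  qed
  finally show ?thesis by (simp add: sum_distrib_left)
qed

lemma poly_pderiv_prod_linear_root: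
  fixes c :: "'b \<Rightarrow> 'a::idom"
  assumes "finite S" and "m \<in> S" and "c m * x = 1"
  shows "x * poly (pderiv (\<Prod>i\<in>S. [:1, - c i:])) x = - (\<Prod>i\<in>S - {m}. 1 - c i * x)"
proof -
  define R where "R = (\<Prod>i\<in>S - {m}. [:1, - c i:])"
  have "(\<Prod>i\<in>S. [:1, - c i:]) = [:1, - c m:] * R"
    unfolding R_def using assms(1,2) by (rule prod.remove)
  then have "x * poly (pderiv (\<Prod>i\<in>S. [:1, - c i:])) x
      = x * (poly [:1, - c m:] x * poly (pderiv R) x + poly R x * poly (pderiv [:1, - c m:]) x)"
    by (simp only: pderiv_mult poly_add poly_mult)
  also have "\<dots> = - poly R x"
    using assms(3) by (simp add: pderiv_pCons algebra_simps)
  also have "poly R x = (\<Prod>i\<in>S - {m}. 1 - c i * x)"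
    unfolding R_def by (simp add: poly_prod mult.commute)
  finally show ?thesis .
qed

definition lagrange_poly :: "'b set \<Rightarrow> ('b \<Rightarrow> 'a) \<Rightarrow> ('b \<Rightarrow> 'a::comm_ring_1) \<Rightarrow> 'a poly" where
  "lagrange_poly I c a = (\<Sum>k\<in>I. smult (a k) (\<Prod>j\<in>I - {k}. [:1, - c j:]))"

lemma degree_lagrange_poly_less:
  assumes "finite I" and "I \<noteq> {}"
  shows "degree (lagrange_poly I c a) < card I"
proof -
  have "degree (lagrange_poly I c a) \<le> card I - 1"
    unfolding lagrange_poly_def
  proof (intro degree_sum_le[OF assms(1)])
    fix k assume "k \<in> I"
    then have "card (I - {k}) = card I - 1"
      using assms(1) by simp
    then show "degree (smult (a k) (\<Prod>j\<in>I - {k}. [:1, - c j:])) \<le> card I - 1"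
      using degree_prod_linear_le[of c "I - {k}"] degree_smult_le order_trans by metis
  qed
  moreover have "card I > 0"
    using assms by (simp add: card_gt_0_iff)
  ultimately show ?thesis by linarith
qed

lemma poly_lagrange_poly_node:
  assumes "finite I" and "m \<in> I" and "c m * x = 1"
  shows "poly (lagrange_poly I c a) x = a m * (\<Prod>j\<in>I - {m}. 1 - c j * x)"
proof -
  have "poly (smult (a k) (\<Prod>j\<in>I - {k}. [:1, - c j:])) x = 0" if "k \<in> I - {m}" for k
  proof -
    have "m \<in> I - {k}" using that assms(2) by auto
    then have "(\<Prod>j\<in>I - {k}. 1 - c j * x) = 0"
      using assms(1,3) by (intro prod_zero bexI[of _ m]) auto
    then show ?thesis by (simp add: poly_prod mult.commute)
  qed
  then have "poly (lagrange_poly I c a) x = poly (smult (a m) (\<Prod>j\<in>I - {m}. [:1, - c j:])) x"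
    unfolding lagrange_poly_def poly_sum using assms(1,2) by (simp add: sum.remove)
  then show ?thesis by (simp add: poly_prod mult.commute)
qed

lemma poly_pderiv_lagrange_poly_node:
  fixes c a :: "'b \<Rightarrow> 'a::field"
  assumes "finite I" and "m \<in> I" and "c m * x = 1"
    and "\<And>j. j \<in> I - {m} \<Longrightarrow> c j * x \<noteq> 1"
  shows "x * poly (pderiv (lagrange_poly I c a)) x
       = - (\<Prod>j\<in>I - {m}. 1 - c j * x)
           * ((\<Sum>k\<in>I - {m}. a k / (1 - c k * x)) + a m * (\<Sum>k\<in>I - {m}. c k * x / (1 - c k * x)))"
proof -
  define D where "D = (\<Prod>j\<in>I - {m}. 1 - c j * x)"
  have other_term: "x * poly (pderiv (smult (a k) (\<Prod>j\<in>I - {k}. [:1, - c j:]))) x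
      = - D * (a k / (1 - c k * x))" if k: "k \<in> I - {m}" for k
  proof -
    have "I - {k} - {m} = I - {m} - {k}"
      by blast
    then have derivative: "x * poly (pderiv (\<Prod>j\<in>I - {k}. [:1, - c j:])) x
        = - (\<Prod>j\<in>I - {m} - {k}. 1 - c j * x)"
      using poly_pderiv_prod_linear_root[of "I - {k}" m c x] assms(1-3) k by auto
    have "1 - c k * x \<noteq> 0"
      using assms(4)[OF k] by simp
    moreover have "D = (1 - c k * x) * (\<Prod>j\<in>I - {m} - {k}. 1 - c j * x)"
      unfolding D_def using assms(1) k by (intro prod.remove) auto
    ultimately have "(\<Prod>j\<in>I - {m} - {k}. 1 - c j * x) = D / (1 - c k * x)"
      by simp
    then show ?thesis
      unfolding pderiv_smult poly_smult mult.left_commute [of x "a k"] derivative by simp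
  qed
  have "x * poly (pderiv (lagrange_poly I c a)) x
      = a m * (x * poly (pderiv (\<Prod>j\<in>I - {m}. [:1, - c j:])) x)
        + (\<Sum>k\<in>I - {m}. x * poly (pderiv (smult (a k) (\<Prod>j\<in>I - {k}. [:1, - c j:]))) x)"
    unfolding lagrange_poly_def pderiv_sum poly_sum sum_distrib_left
    using assms(1,2) by (simp add: sum.remove pderiv_smult mult_ac)
  also have "\<dots> = a m * (- D * (\<Sum>k\<in>I - {m}. c k * x / (1 - c k * x)))
        + (\<Sum>k\<in>I - {m}. - D * (a k / (1 - c k * x)))"
    using poly_pderiv_prod_linear[of "I - {m}" c x] assms(1,4) other_term unfolding D_def by simp
  finally show ?thesis
    unfolding D_def by (simp add: sum_distrib_left algebra_simps)
qed

lemma lagrange_poly_eq_smult_prod_linear: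
  fixes c d a :: "'b \<Rightarrow> 'a::field"
  assumes "finite I" and "finite J" and "card J < card I"
    and "inj_on c I" and "\<And>k. k \<in> I \<Longrightarrow> c k \<noteq> 0"
    and "\<And>k. k \<in> I \<Longrightarrow> a k * (\<Prod>j\<in>I - {k}. 1 - c j / c k) = K * (\<Prod>i\<in>J. 1 - d i / c k)"
  shows "lagrange_poly I c a = smult K (\<Prod>i\<in>J. [:1, - d i:])"
proof (rule poly_eqI_degree)
  let ?A = "(\<lambda>k. inverse (c k)) ` I"
  have "inj_on (\<lambda>k. inverse (c k)) I"
    using assms(4) by (simp add: inj_on_def)
  then have card_A: "card ?A = card I"
    by (rule card_image)
  show "poly (lagrange_poly I c a) x = poly (smult K (\<Prod>i\<in>J. [:1, - d i:])) x" if "x \<in> ?A" for x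
  proof -
    obtain k where k: "k \<in> I" and x: "x = inverse (c k)"
      using \<open>x \<in> ?A\<close> by blast
    have "poly (lagrange_poly I c a) x = a k * (\<Prod>j\<in>I - {k}. 1 - c j / c k)"
      unfolding x using poly_lagrange_poly_node[OF assms(1) k, of c "inverse (c k)"] assms(5)[OF k]
      by (simp add: divide_inverse)
    then show ?thesis
      unfolding assms(6)[OF k] x by (simp add: poly_prod divide_inverse mult.commute)
  qed
  show "degree (lagrange_poly I c a) < card ?A"
    unfolding card_A using assms(1,3) by (intro degree_lagrange_poly_less) auto
  have "degree (smult K (\<Prod>i\<in>J. [:1, - d i:])) \<le> card J"
    using degree_smult_le degree_prod_linear_le order_trans by metis
  then show "degree (smult K (\<Prod>i\<in>J. [:1, - d i:])) < card ?A"
    unfolding card_A using assms(3) by linarith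
qed

lemma interpolation_derivative_identity:
  fixes c d a :: "'b \<Rightarrow> 'a::field"
  assumes "finite I" and "finite J" and "card J < card I"
    and "inj_on c I" and "\<And>k. k \<in> I \<Longrightarrow> c k \<noteq> 0"
    and nodes: "\<And>k. k \<in> I \<Longrightarrow> a k * (\<Prod>j\<in>I - {k}. 1 - c j / c k) = K * (\<Prod>i\<in>J. 1 - d i / c k)"
    and "m \<in> I" and "\<And>i. i \<in> J \<Longrightarrow> d i \<noteq> c m"
  shows "(\<Sum>k\<in>I - {m}. a k / (1 - c k / c m))
       = a m * ((\<Sum>i\<in>J. d i / c m / (1 - d i / c m)) - (\<Sum>k\<in>I - {m}. c k / c m / (1 - c k / c m)))"
proof -
  define x where "x = inverse (c m)"
  have cm: "c m * x = 1"
    unfolding x_def using assms(5,7) by simp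
  have cx: "c j * x = c j / c m" and dx: "d i * x = d i / c m" for i j
    unfolding x_def by (simp_all add: divide_inverse)
  have c_ne: "c j * x \<noteq> 1" if "j \<in> I - {m}" for j
    using that cm assms(4,7) unfolding cx by (auto simp: inj_on_def)
  have d_ne: "d i * x \<noteq> 1" if "i \<in> J" for i
    using assms(5,7) assms(8)[OF that] unfolding dx by simp
  define D where "D = (\<Prod>j\<in>I - {m}. 1 - c j * x)"
  define E where "E = (\<Prod>i\<in>J. 1 - d i * x)"
  define S1 where "S1 = (\<Sum>k\<in>I - {m}. a k / (1 - c k * x))"
  define S2 where "S2 = (\<Sum>i\<in>J. d i * x / (1 - d i * x))"
  define S3 where "S3 = (\<Sum>k\<in>I - {m}. c k * x / (1 - c k * x))"
  have "D \<noteq> 0"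
    unfolding D_def using assms(1) c_ne by simp
  have value_m: "a m * D = K * E"
    using nodes[OF assms(7)] unfolding D_def E_def cx dx .
  have interpolation: "lagrange_poly I c a = smult K (\<Prod>i\<in>J. [:1, - d i:])"
    by (rule lagrange_poly_eq_smult_prod_linear[OF assms(1-6)])
  have "- D * (S1 + a m * S3) = x * poly (pderiv (lagrange_poly I c a)) x"
    unfolding D_def S1_def S3_def using poly_pderiv_lagrange_poly_node[of I m c x a] assms(1,7) cm c_ne by simp
  also have "\<dots> = K * (x * poly (pderiv (\<Prod>i\<in>J. [:1, - d i:])) x)"
    unfolding interpolation by (simp add: pderiv_smult)
  also have "\<dots> = - D * (a m * S2)"
    using poly_pderiv_prod_linear[of J d x] assms(2) d_ne value_m
    unfolding E_def S2_def by (simp add: algebra_simps)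
  finally have "S1 + a m * S3 = a m * S2"
    using \<open>D \<noteq> 0\<close> by simp
  then show ?thesis
    unfolding S1_def S2_def S3_def cx dx by (simp add: algebra_simps)
qed

lemma prod_atLeastLessThan_int_concat:
  fixes g :: "int \<Rightarrow> 'a::comm_monoid_mult"
  assumes "a \<le> b" and "b \<le> c"
  shows "prod g {a..<c} = prod g {a..<b} * prod g {b..<c}"
  using assms by (simp add: prod.union_disjoint [symmetric] ivl_disj_un_two(3))

lemma prod_atLeastLessThan_int_exchange:
  fixes g :: "int \<Rightarrow> 'a::comm_monoid_mult"
  assumes "a \<le> c" and "b \<le> d" and "a \<le> d" and "b \<le> c"
  shows "prod g {a..<c} * prod g {b..<d} = prod g {a..<d} * prod g {b..<c}"
proof (cases "c \<le> d")
  case True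
  then show ?thesis
    using assms prod_atLeastLessThan_int_concat[of b c d g] prod_atLeastLessThan_int_concat[of a c d g]
    by (simp add: ac_simps)
next
  case False
  then show ?thesis
    using assms prod_atLeastLessThan_int_concat[of a d c g] prod_atLeastLessThan_int_concat[of b d c g]
    by (simp add: ac_simps)
qed

lemma qpoch_mult_powi:
  fixes q z :: complex
  assumes "q \<noteq> 0"
  shows "qpoch (z * q powi a) q N = (\<Prod>i<N. 1 - z * q powi (a + int i))"
  unfolding qpoch_def using assms by (simp add: power_int_add mult.assoc)

lemma qpoch_mult_powi_atLeastLessThan:
  fixes q z :: complex
  assumes "q \<noteq> 0"
  shows "qpoch (z * q powi a) q N = (\<Prod>i\<in>{a..<a + int N}. 1 - z * q powi i)"
  unfolding qpoch_mult_powi[OF assms]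
  by (rule prod.reindex_bij_witness[where i = "\<lambda>i. nat (i - a)" and j = "\<lambda>i. a + int i"]) auto

lemma qpoch_powi_exchange:
  fixes q z :: complex
  assumes "q \<noteq> 0" and "k \<le> n" and "l \<le> n"
  shows "qpoch (z * q powi (- int k)) q k * qpoch (z * q powi (- int l)) q (n - k)
       = qpoch (z * q powi (- int k)) q (n - l) * qpoch (z * q powi (- int l)) q l"
proof -
  have bounds: "- int k + int (n - l) = int n - int k - int l" "- int l + int (n - k) = int n - int k - int l"
    "- int k + int k = 0" "- int l + int l = 0"
    using assms(2,3) by auto
  show ?thesis
    unfolding qpoch_mult_powi_atLeastLessThan[OF assms(1)] bounds
    using assms(2,3) by (intro prod_atLeastLessThan_int_exchange) auto
qed

lemma qpoch_mult_powi_neg_reverse: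
  fixes q z :: complex
  assumes "q \<noteq> 0"
  shows "qpoch (z * q powi (- int k)) q k = (\<Prod>i<k. 1 - z * q powi (- int (Suc i)))"
proof -
  have "qpoch (z * q powi (- int k)) q k = (\<Prod>i<k. 1 - z * q powi (- int k + int (k - Suc i)))"
    unfolding qpoch_mult_powi[OF assms] by (rule prod.nat_diff_reindex [symmetric])
  also have "\<dots> = (\<Prod>i<k. 1 - z * q powi (- int (Suc i)))"
    by (intro prod.cong refl) (simp add: of_nat_diff)
  finally show ?thesis .
qed

lemma power_choose_two_Suc: "(x::'a::comm_monoid_mult) ^ ((m + 1) choose 2) = (\<Prod>i<m. x ^ Suc i)"
proof (induction m)
  case (Suc m)
  have "(Suc m + 1) choose 2 = ((m + 1) choose 2) + Suc m"
    by (simp add: numeral_2_eq_2)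
  then show ?case
    using Suc by (simp add: power_add mult_ac)
qed (simp add: numeral_2_eq_2)

lemma qpoch_div_mult_power:
  fixes q z :: complex
  assumes "q \<noteq> 0" and "z \<noteq> 0"
  shows "qpoch (q / z) q m * z ^ m = (-1) ^ m * q ^ ((m + 1) choose 2) * qpoch (z * q powi (- int m)) q m"
proof -
  have "qpoch (q / z) q m * z ^ m = (\<Prod>i<m. (1 - q / z * q ^ i) * z)"
    unfolding qpoch_def by (simp add: prod.distrib)
  also have "\<dots> = (\<Prod>i<m. - 1 * q ^ Suc i * (1 - z * q powi (- int (Suc i))))"
  proof (intro prod.cong refl)
    fix i
    have "q powi (- int (Suc i)) = inverse (q ^ Suc i)"
      by (simp only: power_int_minus power_int_of_nat)
    moreover have "q ^ Suc i \<noteq> 0"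
      using assms(1) by simp
    ultimately show "(1 - q / z * q ^ i) * z = - 1 * q ^ Suc i * (1 - z * q powi (- int (Suc i)))"
      using assms(2) by (simp add: field_simps)
  qed
  also have "\<dots> = (-1) ^ m * q ^ ((m + 1) choose 2) * qpoch (z * q powi (- int m)) q m"
    unfolding qpoch_mult_powi_neg_reverse[OF assms(1)] power_choose_two_Suc prod.distrib by simp
  finally show ?thesis .
qed

lemma qpoch_q_q_nonzero:
  fixes q :: complex
  assumes "\<forall>j\<in>{1..n}. q ^ j \<noteq> 1" and "N \<le> n"
  shows "qpoch q q N \<noteq> 0"
  using assms unfolding qpoch_def by (auto simp flip: power_Suc)

lemma prod_one_minus_powi_remove:
  fixes q :: complex
  assumes "q \<noteq> 0" and "k \<le> n"
  shows "(\<Prod>j\<in>{0..n} - {k}. 1 - q powi (int j - int k)) = qpoch (q powi - int k) q k * qpoch q q (n - k)"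
proof -
  have split: "{0..n} - {k} = {..<k} \<union> {k<..n}"
    using assms(2) by auto
  have "(\<Prod>j\<in>{0..n} - {k}. 1 - q powi (int j - int k))
      = (\<Prod>j<k. 1 - q powi (int j - int k)) * (\<Prod>j\<in>{k<..n}. 1 - q powi (int j - int k))"
    unfolding split by (rule prod.union_disjoint) auto
  moreover have "(\<Prod>j<k. 1 - q powi (int j - int k)) = qpoch (q powi - int k) q k"
    using qpoch_mult_powi[OF assms(1), of 1 "- int k" k] by (simp add: add.commute)
  moreover have "(\<Prod>j\<in>{k<..n}. 1 - q powi (int j - int k)) = qpoch q q (n - k)"
    unfolding qpoch_def
  proof (rule prod.reindex_bij_witness[where i = "\<lambda>i. k + Suc i" and j = "\<lambda>j. j - Suc k"])
    fix j assume "j \<in> {k<..n}"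
    then have "int j - int k = int (Suc (j - Suc k))"
      by simp
    then show "1 - q * q ^ (j - Suc k) = 1 - q powi (int j - int k)"
      by (simp only: power_int_of_nat power_Suc)
  qed (use assms(2) in auto)
  ultimately show ?thesis by simp
qed

lemma qbinom_summand_node_value:
  fixes q z :: complex
  assumes "q \<noteq> 0" and "z \<noteq> 0" and "\<forall>j\<in>{1..n}. q ^ j \<noteq> 1" and "k \<le> n" and "l \<le> n"
  shows "qbinom q n k * qpoch (q / z) q k * qpoch (z * q powi (- int l)) q (n - k) * z ^ k
          * (\<Prod>j\<in>{0..n} - {k}. 1 - q powi (int j - int k))
       = qpoch q q n * qpoch (z * q powi (- int l)) q l * (\<Prod>i<n - l. 1 - z * q powi (int i - int k))"
proof -
  let ?s = "(-1) ^ k * q ^ ((k + 1) choose 2)"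
  have qpoch_q: "qpoch q q k = ?s * qpoch (q powi - int k) q k"
    using qpoch_div_mult_power[OF assms(1) one_neq_zero, of k]
    by (simp only: div_by_1 power_one mult_1_left mult_1_right)
  have "qpoch q q k \<noteq> 0" and "qpoch q q (n - k) \<noteq> 0"
    using qpoch_q_q_nonzero[OF assms(3)] assms(4) by auto
  then have binom: "qbinom q n k * qpoch q q k * qpoch q q (n - k) = qpoch q q n"
    unfolding qbinom_def using assms(4) by simp
  have "qbinom q n k * qpoch (q / z) q k * qpoch (z * q powi (- int l)) q (n - k) * z ^ k
          * (\<Prod>j\<in>{0..n} - {k}. 1 - q powi (int j - int k))
      = qbinom q n k * (qpoch (q / z) q k * z ^ k) * qpoch (z * q powi (- int l)) q (n - k)
          * qpoch (q powi - int k) q k * qpoch q q (n - k)"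
    unfolding prod_one_minus_powi_remove[OF assms(1,4)] by (simp only: ac_simps)
  also have "\<dots> = (qbinom q n k * qpoch q q k * qpoch q q (n - k))
          * (qpoch (z * q powi (- int k)) q k * qpoch (z * q powi (- int l)) q (n - k))"
    unfolding qpoch_div_mult_power[OF assms(1,2)] qpoch_q by (simp only: ac_simps)
  also have "\<dots> = qpoch q q n * qpoch (z * q powi (- int k)) q (n - l) * qpoch (z * q powi (- int l)) q l"
    unfolding binom qpoch_powi_exchange[OF assms(1,4,5)] by (simp only: ac_simps)
  also have "qpoch (z * q powi (- int k)) q (n - l) = (\<Prod>i<n - l. 1 - z * q powi (int i - int k))"
    unfolding qpoch_mult_powi[OF assms(1)] by (simp add: algebra_simps)
  finally show ?thesis
    by (simp only: ac_simps)
qed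

lemma qbinom_summand_diagonal:
  fixes q z :: complex
  assumes "q \<noteq> 0" and "z \<noteq> 0" and "l \<le> n" and "m \<le> n"
  shows "qbinom q n m * qpoch (q / z) q m * qpoch (z * q powi (- int l)) q (n - m) * z ^ m
       = (-1) ^ m * q ^ ((m + 1) choose 2) * qbinom q n m * qpoch (z * q powi (- int l)) q l
           * qpoch (z * q powi (- int m)) q (n - l)"
proof -
  have "qbinom q n m * qpoch (q / z) q m * qpoch (z * q powi (- int l)) q (n - m) * z ^ m
      = qbinom q n m * (qpoch (q / z) q m * z ^ m) * qpoch (z * q powi (- int l)) q (n - m)"
    by (simp only: ac_simps)
  also have "\<dots> = (-1) ^ m * q ^ ((m + 1) choose 2) * qbinom q n m
        * (qpoch (z * q powi (- int m)) q m * qpoch (z * q powi (- int l)) q (n - m))"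
    unfolding qpoch_div_mult_power[OF assms(1,2)] by (simp only: ac_simps)
  finally show ?thesis
    unfolding qpoch_powi_exchange[OF assms(1,4,3)] by (simp only: ac_simps)
qed

lemma power_divide_power_eq_power_int:
  fixes q :: "'a::field"
  assumes "q \<noteq> 0"
  shows "q ^ j / q ^ k = q powi (int j - int k)"
  using assms by (simp add: power_int_diff)

lemma inj_on_power_atMost:
  fixes q :: "'a::field"
  assumes "q \<noteq> 0" and "\<forall>j\<in>{1..n}. q ^ j \<noteq> 1"
  shows "inj_on (\<lambda>k. q ^ k) {0..n}"
proof -
  have "q ^ i \<noteq> q ^ j" if "i < j" and "j \<le> n" for i j
  proof
    assume "q ^ i = q ^ j"
    moreover have "q ^ i * q ^ (j - i) = q ^ j"
      using that(1) by (simp flip: power_add)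
    ultimately have "q ^ i * q ^ (j - i) = q ^ i * 1"
      by simp
    then have "q ^ (j - i) = 1"
      using assms(1) by simp
    moreover have "j - i \<in> {1..n}"
      using that by auto
    ultimately show False
      using assms(2) by blast
  qed
  then show ?thesis
    unfolding inj_on_def by (metis atLeastAtMost_iff linorder_neqE_nat)
qed

theorem theorem1p1:
  fixes q z :: complex and n l m :: nat
  assumes "l \<le> n" and "m \<le> n"
    and "q \<noteq> 0" and "z \<noteq> 0"
    and "\<forall>j\<in>{1..n}. q ^ j \<noteq> 1"
    and "\<forall>k<n - l. z * q powi (int k - int m) \<noteq> 1"
  shows "(\<Sum>k\<in>{0..n} - {m}. qbinom q n k * qpoch (q / z) q k * qpoch (z * q powi (- int l)) q (n - k)
             / (1 - q powi (int k - int m)) * z ^ k)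
       = (-1) ^ m * q ^ ((m + 1) choose 2) * qbinom q n m * qpoch (z * q powi (- int l)) q l
           * qpoch (z * q powi (- int m)) q (n - l)
           * ((\<Sum>k<n - l. z * q powi (int k - int m) / (1 - z * q powi (int k - int m)))
              - (\<Sum>k\<in>{0..n} - {m}. q powi (int k - int m) / (1 - q powi (int k - int m))))"
proof -
  define a where "a k = qbinom q n k * qpoch (q / z) q k * qpoch (z * q powi (- int l)) q (n - k) * z ^ k"
    for k
  have quot: "q ^ j / q ^ k = q powi (int j - int k)" "z * q ^ j / q ^ k = z * q powi (int j - int k)"
    for j k
    using power_divide_power_eq_power_int[OF assms(3)] by (simp_all flip: times_divide_eq_right)
  have "(\<Sum>k\<in>{0..n} - {m}. a k / (1 - q ^ k / q ^ m))
      = a m * ((\<Sum>i<n - l. z * q ^ i / q ^ m / (1 - z * q ^ i / q ^ m))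
               - (\<Sum>k\<in>{0..n} - {m}. q ^ k / q ^ m / (1 - q ^ k / q ^ m)))"
  proof (rule interpolation_derivative_identity
      [where K = "qpoch q q n * qpoch (z * q powi (- int l)) q l"])
    show "inj_on (\<lambda>k. q ^ k) {0..n}"
      using assms(3,5) by (rule inj_on_power_atMost)
    show "z * q ^ i \<noteq> q ^ m" if "i \<in> {..<n - l}" for i
      using assms(3,6) that quot(2)[of i m] by auto
    show "a k * (\<Prod>j\<in>{0..n} - {k}. 1 - q ^ j / q ^ k)
        = qpoch q q n * qpoch (z * q powi (- int l)) q l * (\<Prod>i<n - l. 1 - z * q ^ i / q ^ k)"
      if "k \<in> {0..n}" for k
      using qbinom_summand_node_value[OF assms(3-5) _ assms(1), of k] that unfolding a_def quot by simp
  qed (use assms(2,3) in auto)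
  then show ?thesis
    unfolding quot a_def qbinom_summand_diagonal[OF assms(3,4,1,2)] by (simp add: divide_inverse ac_simps)
qed

end
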